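(* Let $G=(V,E)$ be a finite graph. (i) For every $z>0$ the fixed point equation $\mathbf{X}=z\mathcal{R}_G(\mathbf{X})$ on $[0,\infty)^{\vec E}$ has a unique solution $\mathbf{Y}(z)\in(0,\infty)^{\vec E}$, and it is attractive: the iterates $\mathbf{X}^0=0$, $\mathbf{X}^{t+1}=z\mathcal{R}_G(\mathbf{X}^t)$ converge to $\mathbf{Y}(z)$. (ii) The map $z\mapsto\mathbf{Y}(z)$ is non-decreasing and $z\mapsto\mathbf{Y}(z)/z$ is non-increasing on $(0,\infty)$ (componentwise). (iii) If moreover $G$ is a tree, then for every $e\in E$ and either orientation $\vec e$ of $e$, $$\mu^z_G(B_e=1)=\frac{Y_{\vec e}(z)\mathcal{R}_{-\vec e}(\mathbf{Y}(z))}{1+Y_{\vec e}(z)\mathcal{R}_{-\vec e}(\mathbf{Y}(z))}.$$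
   Context: $\vec E$: directed edges of $G$ ($u\to v$, $v\to u$ per edge $uv$), $-\vec e$ the reverse of $\vec e$; $\partial u$: neighbours of $u$; empty sums are $0$. $\mathcal{R}_G:[0,\infty)^{\vec E}\to[0,1]^{\vec E}$ is defined by $\mathcal{R}_G(\mathbf{X})_{u\to v}=\mathcal{R}_{u\to v}(\mathbf{X})=1/(1+\sum_{w\in\partial u\setminus v}X_{w\to u})$, and $z\mathcal{R}_G$ multiplies each component by $z$. Comparisons of vectors are componentwise. The Gibbs measure on matchings ($\mathbf{B}\in\{0,1\}^E$ with at most one edge of $\mathbf{B}$ at each vertex) is $\mu^z_G(\mathbf{B})=z^{\sum_eB_e}/P_G(z)$, $P_G(z)$ the normalising constant. *)

theory Defs
  imports "HOL-Analysis.Analysis"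
begin

text \<open>A finite simple graph: vertex set V, directed edge set D (both orientations of
every undirected edge), symmetric and irreflexive.\<close>
definition finite_graph :: "'a set \<Rightarrow> ('a \<times> 'a) set \<Rightarrow> bool" where
  "finite_graph V D \<longleftrightarrow> finite V \<and> D \<subseteq> V \<times> V \<and> sym D \<and> (\<forall>u. (u, u) \<notin> D)"

definition nbrs :: "('a \<times> 'a) set \<Rightarrow> 'a \<Rightarrow> 'a set" where
  "nbrs D u = {w. (w, u) \<in> D}"

definition uedges :: "('a \<times> 'a) set \<Rightarrow> 'a set set" where
  "uedges D = {{u, v} | u v. (u, v) \<in> D}"

definition RG :: "('a \<times> 'a) set \<Rightarrow> ('a \<times> 'a \<Rightarrow> real) \<Rightarrow> 'a \<times> 'a \<Rightarrow> real" where
  "RG D X e = 1 / (1 + (\<Sum>w \<in> nbrs D (fst e) - {snd e}. X (w, fst e)))"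

primrec RG_iter :: "('a \<times> 'a) set \<Rightarrow> real \<Rightarrow> nat \<Rightarrow> 'a \<times> 'a \<Rightarrow> real" where
  "RG_iter D z 0 = (\<lambda>_. 0)"
| "RG_iter D z (Suc t) = (\<lambda>e. z * RG D (RG_iter D z t) e)"

definition matchings :: "('a \<times> 'a) set \<Rightarrow> 'a set set set" where
  "matchings D = {M. M \<subseteq> uedges D \<and> (\<forall>v. card {e \<in> M. v \<in> e} \<le> 1)}"

definition partition_fn :: "('a \<times> 'a) set \<Rightarrow> real \<Rightarrow> real" where
  "partition_fn D z = (\<Sum>M \<in> matchings D. z ^ card M)"

definition gibbs_edge_prob :: "('a \<times> 'a) set \<Rightarrow> real \<Rightarrow> 'a set \<Rightarrow> real" where
  "gibbs_edge_prob D z e =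
     (\<Sum>M \<in> {M \<in> matchings D. e \<in> M}. z ^ card M) / partition_fn D z"

definition connected_graph :: "'a set \<Rightarrow> ('a \<times> 'a) set \<Rightarrow> bool" where
  "connected_graph V D \<longleftrightarrow> (\<forall>u \<in> V. \<forall>v \<in> V. (u, v) \<in> D\<^sup>*)"

definition is_cycle :: "('a \<times> 'a) set \<Rightarrow> 'a list \<Rightarrow> bool" where
  "is_cycle D cs \<longleftrightarrow> length cs \<ge> 3 \<and> distinct cs
      \<and> (\<forall>i < length cs - 1. (cs ! i, cs ! Suc i) \<in> D)
      \<and> (last cs, hd cs) \<in> D"

definition is_tree :: "'a set \<Rightarrow> ('a \<times> 'a) set \<Rightarrow> bool" where
  "is_tree V D \<longleftrightarrow> V \<noteq> {} \<and> connected_graph V D \<and> (\<nexists>cs. is_cycle D cs)"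

end

theory Submission
  imports Defs "HOL-Library.Transitive_Closure_Table" "HOL-Probability.Characteristic_Functions"
begin

(* Parts (i) and (ii) rest on one strict contraction estimate for R_G: if 0 <= X <= c Y
   componentwise with c > 1, then R_G(Y) < c R_G(X) (RG_ratio_strict).  A finite-maximum
   argument (ratio_squeeze) turns it into two comparison principles: nonnegative fixed points
   A, B of z1 R_G and z2 R_G with z1 <= z2 satisfy A <= B <= (z2/z1) A, and a 2-cycle of z R_G
   is constant.  As R_G is antitone, the even iterates from 0 increase and the odd ones
   decrease; their limits form a 2-cycle, hence coincide.  So the iterates converge to a
   fixed point RG_limit, which by the comparison principle is unique and monotone in z.

   For part (iii) let Z(F,S) be the weighted count of matchings with edges in F covering no
   vertex of S.  On an acyclic graph, deleting an edge uv separates u from v, which gives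
   Z(G,{u}) Z(G,{v}) = Z(G,{u,v}) Z(G-uv,{}).  With this identity the explicit candidate
   Y(u->v) = z Z(G,{u}) / Z(G-uv,{}) (tree_cavity) solves the fixed point equation and
   expresses the Gibbs edge probability; uniqueness identifies it with RG_limit. *)

(* Squeezing two positive vectors: if every two-sided ratio bound A <= cB, B <= c rho A with
   c > 1 can be made strict, then the bound already holds with c = 1.  Apply it to the maximal
   ratio over the finite index set. *)
lemma ratio_squeeze:
  fixes A B :: "'b \<Rightarrow> real"
  assumes fin: "finite I" and rho: "\<rho> \<ge> 1" and pos: "\<And>i. i \<in> I \<Longrightarrow> A i > 0 \<and> B i > 0"
    and improve: "\<And>c. c > 1 \<Longrightarrow> (\<forall>i\<in>I. A i \<le> c * B i \<and> B i \<le> c * \<rho> * A i) \<Longrightarrow>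
              (\<forall>i\<in>I. A i < c * B i \<and> B i < c * \<rho> * A i)"
  shows "\<forall>i\<in>I. A i \<le> B i \<and> B i \<le> \<rho> * A i"
proof (cases "I = {}")
  case False
  define r where "r i = max (A i / B i) (B i / (\<rho> * A i))" for i
  define c where "c = Max (r ` I)"
  have r_iff: "r i \<le> b \<longleftrightarrow> A i \<le> b * B i \<and> B i \<le> b * \<rho> * A i"
    and r_less_iff: "r i < b \<longleftrightarrow> A i < b * B i \<and> B i < b * \<rho> * A i" if "i \<in> I" for i b
    using pos[OF that] rho by (auto simp: r_def divide_simps mult.assoc)
  have r_le_c: "\<forall>i\<in>I. r i \<le> c" unfolding c_def using fin by simp
  have "c \<in> r ` I" unfolding c_def using fin False by simp
  then obtain i0 where i0: "i0 \<in> I" "r i0 = c" by auto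
  have "c \<le> 1"
  proof (rule ccontr)
    assume "\<not> c \<le> 1"
    hence "\<forall>i\<in>I. A i < c * B i \<and> B i < c * \<rho> * A i"
      using improve r_le_c r_iff by simp
    hence "r i0 < c" using r_less_iff i0 by blast
    with i0 show False by simp
  qed
  show ?thesis
  proof
    fix i assume i: "i \<in> I"
    have "r i \<le> 1" using r_le_c i \<open>c \<le> 1\<close> by fastforce
    thus "A i \<le> B i \<and> B i \<le> \<rho> * A i" using r_iff[OF i, of 1] by simp
  qed
qed simp

lemma RG_sum_nonneg:
  fixes X :: "'a \<times> 'a \<Rightarrow> real"
  assumes "\<And>d. d \<in> D \<Longrightarrow> 0 \<le> X d"
  shows "0 \<le> (\<Sum>w \<in> nbrs D (fst e) - {snd e}. X (w, fst e))"
  using assms unfolding nbrs_def by (intro sum_nonneg) auto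

lemma RG_pos_le_one:
  assumes "\<And>d. d \<in> D \<Longrightarrow> 0 \<le> X d"
  shows "0 < RG D X e \<and> RG D X e \<le> 1"
  using RG_sum_nonneg[of D X e, OF assms] unfolding RG_def by simp

lemma RG_antimono:
  assumes "\<And>d. d \<in> D \<Longrightarrow> 0 \<le> X d \<and> X d \<le> X' d"
  shows "RG D X' e \<le> RG D X e"
proof -
  have "(\<Sum>w \<in> nbrs D (fst e) - {snd e}. X (w, fst e))
          \<le> (\<Sum>w \<in> nbrs D (fst e) - {snd e}. X' (w, fst e))"
    using assms unfolding nbrs_def by (intro sum_mono) auto
  moreover have "0 \<le> (\<Sum>w \<in> nbrs D (fst e) - {snd e}. X (w, fst e))"
    using assms by (intro RG_sum_nonneg) auto
  ultimately show ?thesis unfolding RG_def by (simp add: frac_le)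
qed

lemma RG_ratio_strict:
  assumes c: "c > 1" and bound: "\<And>d. d \<in> D \<Longrightarrow> 0 \<le> Y d \<and> 0 \<le> X d \<and> X d \<le> c * Y d"
  shows "RG D Y e < c * RG D X e"
proof -
  define sx where "sx = (\<Sum>w \<in> nbrs D (fst e) - {snd e}. X (w, fst e))"
  define sy where "sy = (\<Sum>w \<in> nbrs D (fst e) - {snd e}. Y (w, fst e))"
  have "sx \<le> (\<Sum>w \<in> nbrs D (fst e) - {snd e}. c * Y (w, fst e))"
    unfolding sx_def using bound unfolding nbrs_def by (intro sum_mono) auto
  also have "\<dots> = c * sy" unfolding sy_def by (simp add: sum_distrib_left)
  finally have "1 + sx < c * (1 + sy)" using c by (simp add: algebra_simps)
  moreover have "0 \<le> sx" "0 \<le> sy"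
    unfolding sx_def sy_def using bound by (auto intro: RG_sum_nonneg)
  ultimately show ?thesis unfolding RG_def sx_def[symmetric] sy_def[symmetric]
    using c by (simp add: divide_simps)
qed

lemma RG_tendsto:
  fixes L :: "'a \<times> 'a \<Rightarrow> real"
  assumes "\<And>d. d \<in> D \<Longrightarrow> (\<lambda>k. X k d) \<longlonglongrightarrow> L d" and "\<And>d. d \<in> D \<Longrightarrow> 0 \<le> L d"
  shows "(\<lambda>k. RG D (X k) e) \<longlonglongrightarrow> RG D L e"
  unfolding RG_def
proof (intro tendsto_divide tendsto_add tendsto_const tendsto_sum)
  show "(\<lambda>k. X k (w, fst e)) \<longlonglongrightarrow> L (w, fst e)" if "w \<in> nbrs D (fst e) - {snd e}" for w
    using assms(1) that unfolding nbrs_def by auto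
  show "1 + (\<Sum>w\<in>nbrs D (fst e) - {snd e}. L (w, fst e)) \<noteq> 0"
    using RG_sum_nonneg[of D L e] assms(2) by fastforce
qed

lemma scaled_RG_pos:
  assumes "0 < z" and "\<And>d. d \<in> D \<Longrightarrow> 0 \<le> X d"
  shows "0 < z * RG D X e"
  using RG_pos_le_one[of D X e] assms by simp

lemma fixed_point_compare:
  fixes A B :: "'a \<times> 'a \<Rightarrow> real"
  assumes fin: "finite D" and z1: "0 < z1" and z12: "z1 \<le> z2"
    and A_nonneg: "\<And>e. e \<in> D \<Longrightarrow> 0 \<le> A e" and A_fix: "\<And>e. e \<in> D \<Longrightarrow> A e = z1 * RG D A e"
    and B_nonneg: "\<And>e. e \<in> D \<Longrightarrow> 0 \<le> B e" and B_fix: "\<And>e. e \<in> D \<Longrightarrow> B e = z2 * RG D B e"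
  shows "\<forall>e\<in>D. A e \<le> B e \<and> B e \<le> (z2 / z1) * A e"
proof (rule ratio_squeeze[OF fin])
  define \<rho> where "\<rho> = z2 / z1"
  have z2: "z2 = \<rho> * z1" and \<rho>_pos: "\<rho> > 0" unfolding \<rho>_def using z1 z12 by simp_all
  show "z2 / z1 \<ge> 1" using z1 z12 by simp
  show "A e > 0 \<and> B e > 0" if e: "e \<in> D" for e
    using scaled_RG_pos[OF z1, of D A e, OF A_nonneg] scaled_RG_pos[of z2 D B e, OF _ B_nonneg]
      A_fix[OF e] B_fix[OF e] z1 z12 by simp
  fix c :: real assume c: "c > 1"
    and bound: "\<forall>d\<in>D. A d \<le> c * B d \<and> B d \<le> c * (z2 / z1) * A d"
  have c\<rho>: "c * \<rho> > 1"
  proof -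
    have "z2 < c * z2" using c z1 z12 by (simp add: mult_less_cancel_right1)
    hence "z1 < c * z2" using z12 by simp
    thus ?thesis using z1 by (simp add: \<rho>_def field_simps)
  qed
  show "\<forall>e\<in>D. A e < c * B e \<and> B e < c * (z2 / z1) * A e"
  proof
    fix e assume e: "e \<in> D"
    have "RG D A e < (c * \<rho>) * RG D B e"
      by (rule RG_ratio_strict[OF c\<rho>]) (use bound A_nonneg B_nonneg in \<open>auto simp: \<rho>_def mult.assoc\<close>)
    hence "A e < c * B e" using A_fix[OF e] B_fix[OF e] z1 unfolding z2 by (simp add: ac_simps)
    moreover have "RG D B e < c * RG D A e"
      by (rule RG_ratio_strict[OF c]) (use bound A_nonneg B_nonneg in auto)
    hence "B e < c * \<rho> * A e" using A_fix[OF e] B_fix[OF e] z1 \<rho>_pos unfolding z2 by (simp add: ac_simps)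
    ultimately show "A e < c * B e \<and> B e < c * (z2 / z1) * A e" unfolding \<rho>_def by simp
  qed
qed

lemma two_cycle_collapse:
  fixes L U :: "'a \<times> 'a \<Rightarrow> real"
  assumes fin: "finite D" and z: "0 < z"
    and L_nonneg: "\<And>e. e \<in> D \<Longrightarrow> 0 \<le> L e" and L_eq: "\<And>e. e \<in> D \<Longrightarrow> L e = z * RG D U e"
    and U_nonneg: "\<And>e. e \<in> D \<Longrightarrow> 0 \<le> U e" and U_eq: "\<And>e. e \<in> D \<Longrightarrow> U e = z * RG D L e"
  shows "\<forall>e\<in>D. L e = U e"
proof -
  have "\<forall>e\<in>D. L e \<le> U e \<and> U e \<le> 1 * L e"
  proof (rule ratio_squeeze[OF fin order_refl])
    show "L e > 0 \<and> U e > 0" if e: "e \<in> D" for e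
      using scaled_RG_pos[OF z, of D U e, OF U_nonneg] scaled_RG_pos[OF z, of D L e, OF L_nonneg]
        L_eq[OF e] U_eq[OF e] by simp
    fix c :: real assume c: "c > 1" and bound: "\<forall>d\<in>D. L d \<le> c * U d \<and> U d \<le> c * 1 * L d"
    show "\<forall>e\<in>D. L e < c * U e \<and> U e < c * 1 * L e"
    proof
      fix e assume e: "e \<in> D"
      have "RG D U e < c * RG D L e"
        by (rule RG_ratio_strict[OF c]) (use bound L_nonneg U_nonneg in auto)
      moreover have "RG D L e < c * RG D U e"
        by (rule RG_ratio_strict[OF c]) (use bound L_nonneg U_nonneg in auto)
      ultimately show "L e < c * U e \<and> U e < c * 1 * L e"
        using L_eq[OF e] U_eq[OF e] z by (simp add: mult.left_commute)
    qed
  qed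
  thus ?thesis by force
qed

lemma RG_iter_bounds:
  assumes "z > 0"
  shows "0 \<le> RG_iter D z t e \<and> RG_iter D z t e \<le> z"
proof (induction t arbitrary: e)
  case (Suc t)
  then show ?case using RG_pos_le_one[of D "RG_iter D z t" e] assms
    by (simp add: mult_le_cancel_left1)
qed (use assms in simp)

lemma RG_iter_step_antitone:
  assumes z: "z > 0" and le: "\<And>e. RG_iter D z s e \<le> RG_iter D z t e"
  shows "RG_iter D z (Suc t) e \<le> RG_iter D z (Suc s) e"
proof -
  have "RG D (RG_iter D z t) e \<le> RG D (RG_iter D z s) e"
    by (rule RG_antimono) (use le RG_iter_bounds[OF z] in blast)
  thus ?thesis using z by simp
qed

lemma RG_iter_even_odd_mono:
  assumes z: "z > 0"
  shows "(\<forall>e. RG_iter D z (2*k) e \<le> RG_iter D z (Suc (Suc (2*k))) e)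
       \<and> (\<forall>e. RG_iter D z (Suc (Suc (Suc (2*k)))) e \<le> RG_iter D z (Suc (2*k)) e)"
proof (induction k)
  case 0
  have "RG_iter D z 1 e = z" for e by (simp add: RG_def)
  then show ?case
    using RG_iter_bounds[OF z, of D "Suc (Suc 0)"] RG_iter_bounds[OF z, of D "Suc (Suc (Suc 0))"]
    by (simp del: RG_iter.simps add: RG_iter.simps(1))
next
  case (Suc k)
  have "RG_iter D z (Suc (Suc (2*k))) e \<le> RG_iter D z (Suc (Suc (Suc (Suc (2*k))))) e" for e
    by (rule RG_iter_step_antitone[OF z]) (use Suc.IH in blast)
  hence even: "RG_iter D z (2*Suc k) e \<le> RG_iter D z (Suc (Suc (2*Suc k))) e" for e
    by (simp del: RG_iter.simps)
  have "RG_iter D z (Suc (Suc (Suc (2*Suc k)))) e \<le> RG_iter D z (Suc (2*Suc k)) e" for e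
    by (rule RG_iter_step_antitone[OF z]) (use even in blast)
  with even show ?case by blast
qed

lemma RG_iter_even_odd_limits:
  assumes z: "z > 0"
  obtains L U where
    "\<And>e. (\<lambda>k. RG_iter D z (2*k) e) \<longlonglongrightarrow> L e" and "\<And>e. (\<lambda>k. RG_iter D z (Suc (2*k)) e) \<longlonglongrightarrow> U e"
    and "\<And>e. 0 \<le> L e" and "\<And>e. 0 \<le> U e"
    and "\<And>e. L e = z * RG D U e" and "\<And>e. U e = z * RG D L e"
proof -
  let ?X = "RG_iter D z"
  have lower: "0 \<le> ?X t e" and upper: "?X t e \<le> z" for t e
    using RG_iter_bounds[OF z, of D t e] by simp_all
  have even_mono: "?X (2*k) e \<le> ?X (Suc (Suc (2*k))) e"
    and odd_mono: "?X (Suc (Suc (Suc (2*k)))) e \<le> ?X (Suc (2*k)) e" for k e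
    using RG_iter_even_odd_mono[OF z, of D k] by blast+
  define L where "L e = (SUP k. ?X (2*k) e)" for e
  define U where "U e = (INF k. ?X (Suc (2*k)) e)" for e
  have L_lim: "(\<lambda>k. ?X (2*k) e) \<longlonglongrightarrow> L e" for e
    unfolding L_def
  proof (rule LIMSEQ_incseq_SUP)
    show "bdd_above (range (\<lambda>k. ?X (2*k) e))" using upper by (intro bdd_aboveI[where M = z]) blast
    show "incseq (\<lambda>k. ?X (2*k) e)"
      by (rule incseq_SucI) (use even_mono in \<open>simp del: RG_iter.simps\<close>)
  qed
  have U_lim: "(\<lambda>k. ?X (Suc (2*k)) e) \<longlonglongrightarrow> U e" for e
    unfolding U_def
  proof (rule LIMSEQ_decseq_INF)
    show "bdd_below (range (\<lambda>k. ?X (Suc (2*k)) e))" using lower by (intro bdd_belowI[where m = 0]) blast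
    show "decseq (\<lambda>k. ?X (Suc (2*k)) e)"
      by (rule decseq_SucI) (use odd_mono in \<open>simp del: RG_iter.simps\<close>)
  qed
  have L_nonneg: "0 \<le> L e" and U_nonneg: "0 \<le> U e" for e
    using LIMSEQ_le_const[OF L_lim] LIMSEQ_le_const[OF U_lim] lower by blast+
  have "(\<lambda>k. ?X (Suc (2*k)) e) \<longlonglongrightarrow> z * RG D L e" for e
    by (subst RG_iter.simps(2)) (intro tendsto_mult_left RG_tendsto L_lim L_nonneg)
  hence U_eq: "U e = z * RG D L e" for e using U_lim LIMSEQ_unique by blast
  have "(\<lambda>k. ?X (Suc (Suc (2*k))) e) \<longlonglongrightarrow> z * RG D U e" for e
    by (subst RG_iter.simps(2)) (intro tendsto_mult_left RG_tendsto U_lim U_nonneg)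
  moreover have "(\<lambda>k. ?X (Suc (Suc (2*k))) e) \<longlonglongrightarrow> L e" for e
    using LIMSEQ_Suc[OF L_lim[of e]] by (simp del: RG_iter.simps)
  ultimately have L_eq: "L e = z * RG D U e" for e using LIMSEQ_unique by blast
  show thesis by (rule that[OF L_lim U_lim L_nonneg U_nonneg L_eq U_eq])
qed

definition RG_limit :: "('a \<times> 'a) set \<Rightarrow> real \<Rightarrow> 'a \<times> 'a \<Rightarrow> real" where
  "RG_limit D z e = lim (\<lambda>t. RG_iter D z t e)"

(* Attractivity: on a finite graph the whole sequence of iterates converges, since the even and
   odd limits coincide by two_cycle_collapse. *)
lemma RG_iter_tendsto:
  assumes fin: "finite D" and z: "z > 0" and e: "e \<in> D"
  shows "(\<lambda>t. RG_iter D z t e) \<longlonglongrightarrow> RG_limit D z e"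
proof -
  obtain L U where L_lim: "\<And>e. (\<lambda>k. RG_iter D z (2*k) e) \<longlonglongrightarrow> L e"
    and U_lim: "\<And>e. (\<lambda>k. RG_iter D z (Suc (2*k)) e) \<longlonglongrightarrow> U e"
    and nonneg: "\<And>e. 0 \<le> L e" "\<And>e. 0 \<le> U e"
    and cycle: "\<And>e. L e = z * RG D U e" "\<And>e. U e = z * RG D L e"
    using RG_iter_even_odd_limits[OF z] by metis
  have "\<forall>e\<in>D. L e = U e"
    by (rule two_cycle_collapse[OF fin z nonneg(1) cycle(1) nonneg(2) cycle(2)])
  hence "(\<lambda>k. RG_iter D z (2*k + 1) e) \<longlonglongrightarrow> L e"
    using U_lim[of e] e by (simp del: RG_iter.simps)
  hence "(\<lambda>t. RG_iter D z t e) \<longlonglongrightarrow> L e" by (rule limseq_even_odd[OF L_lim])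
  thus ?thesis unfolding RG_limit_def by (simp add: limI)
qed

lemma RG_limit_nonneg:
  assumes "finite D" and z: "z > 0" and "e \<in> D"
  shows "0 \<le> RG_limit D z e"
  using LIMSEQ_le_const[OF RG_iter_tendsto[OF assms]] RG_iter_bounds[OF z] by blast

lemma RG_limit_fixed_point:
  assumes fin: "finite D" and z: "z > 0" and e: "e \<in> D"
  shows "RG_limit D z e = z * RG D (RG_limit D z) e"
proof -
  have "(\<lambda>t. RG_iter D z (Suc t) e) \<longlonglongrightarrow> z * RG D (RG_limit D z) e"
    by (simp del: RG_iter.simps(1))
      (intro tendsto_mult_left RG_tendsto RG_iter_tendsto[OF fin z] RG_limit_nonneg[OF fin z])
  thus ?thesis using LIMSEQ_Suc[OF RG_iter_tendsto[OF fin z e]] LIMSEQ_unique by blast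
qed

lemma RG_limit_pos:
  assumes fin: "finite D" and z: "z > 0" and e: "e \<in> D"
  shows "0 < RG_limit D z e"
  using scaled_RG_pos[OF z, of D "RG_limit D z" e] RG_limit_nonneg[OF fin z]
    RG_limit_fixed_point[OF fin z e] by simp

lemma RG_limit_unique:
  fixes X :: "'a \<times> 'a \<Rightarrow> real"
  assumes fin: "finite D" and z: "z > 0" and e: "e \<in> D"
    and X_nonneg: "\<And>d. d \<in> D \<Longrightarrow> 0 \<le> X d" and X_fix: "\<And>d. d \<in> D \<Longrightarrow> X d = z * RG D X d"
  shows "X e = RG_limit D z e"
proof -
  have "\<forall>d\<in>D. X d \<le> RG_limit D z d \<and> RG_limit D z d \<le> (z / z) * X d"
    by (rule fixed_point_compare[OF fin z order_refl X_nonneg X_fix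
          RG_limit_nonneg[OF fin z] RG_limit_fixed_point[OF fin z]])
  thus ?thesis using e z by force
qed

lemma RG_limit_mono:
  assumes fin: "finite D" and z1: "0 < z1" and z12: "z1 \<le> z2" and e: "e \<in> D"
  shows "RG_limit D z1 e \<le> RG_limit D z2 e \<and> RG_limit D z2 e / z2 \<le> RG_limit D z1 e / z1"
proof -
  have z2: "0 < z2" using z1 z12 by simp
  have "\<forall>d\<in>D. RG_limit D z1 d \<le> RG_limit D z2 d \<and> RG_limit D z2 d \<le> (z2 / z1) * RG_limit D z1 d"
    by (rule fixed_point_compare[OF fin z1 z12 RG_limit_nonneg[OF fin z1] RG_limit_fixed_point[OF fin z1]
          RG_limit_nonneg[OF fin z2] RG_limit_fixed_point[OF fin z2]])
  thus ?thesis using e z1 z2 by (auto simp: divide_simps mult.commute)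
qed



definition matchings_avoiding :: "'a set set \<Rightarrow> 'a set \<Rightarrow> 'a set set set" where
  "matchings_avoiding F S = {M. M \<subseteq> F \<and> (\<forall>e1\<in>M. \<forall>e2\<in>M. e1 \<noteq> e2 \<longrightarrow> e1 \<inter> e2 = {})
                                 \<and> (\<forall>e\<in>M. e \<inter> S = {})}"

definition Z_avoiding :: "real \<Rightarrow> 'a set set \<Rightarrow> 'a set \<Rightarrow> real" where
  "Z_avoiding z F S = (\<Sum>M \<in> matchings_avoiding F S. z ^ card M)"

lemma finite_matchings_avoiding: "finite F \<Longrightarrow> finite (matchings_avoiding F S)"
  by (rule finite_subset[of _ "Pow F"]) (auto simp: matchings_avoiding_def)

(* The empty matching makes Z positive. *)
lemma Z_avoiding_pos:
  assumes "finite F" and "z > 0"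
  shows "Z_avoiding z F S > 0"
proof -
  have "{} \<in> matchings_avoiding F S" by (simp add: matchings_avoiding_def)
  hence "z ^ card ({} :: 'a set set) \<le> Z_avoiding z F S"
    unfolding Z_avoiding_def using assms by (intro member_le_sum finite_matchings_avoiding) auto
  thus ?thesis by simp
qed

lemma Z_avoiding_cong:
  assumes "\<And>e. e \<in> F \<Longrightarrow> e \<inter> S = e \<inter> S'"
  shows "Z_avoiding z F S = Z_avoiding z F S'"
proof -
  have "matchings_avoiding F S = matchings_avoiding F S'"
  proof -
    have "(\<forall>e\<in>M. e \<inter> S = {}) \<longleftrightarrow> (\<forall>e\<in>M. e \<inter> S' = {})" if "M \<subseteq> F" for M
      using that assms by (metis subsetD)
    thus ?thesis unfolding matchings_avoiding_def by (simp cong: conj_cong)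
  qed
  thus ?thesis by (simp add: Z_avoiding_def)
qed

(* An edge meeting S can never be used, so it may be removed. *)
lemma Z_avoiding_remove_edge:
  assumes "e \<inter> S \<noteq> {}"
  shows "Z_avoiding z (F - {e}) S = Z_avoiding z F S"
proof -
  have "matchings_avoiding (F - {e}) S = matchings_avoiding F S"
    unfolding matchings_avoiding_def using assms by auto
  thus ?thesis by (simp add: Z_avoiding_def)
qed

lemma Z_avoiding_split_edge:
  assumes "finite F"
  shows "Z_avoiding z F S
           = Z_avoiding z (F - {e}) S + (\<Sum>M \<in> {M \<in> matchings_avoiding F S. e \<in> M}. z ^ card M)"
proof -
  have "matchings_avoiding F S - {M. e \<in> M} = matchings_avoiding (F - {e}) S"
    unfolding matchings_avoiding_def by auto
  moreover have "matchings_avoiding F S \<inter> {M. e \<in> M} = {M \<in> matchings_avoiding F S. e \<in> M}"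
    by blast
  ultimately show ?thesis
    using sum.Int_Diff[OF finite_matchings_avoiding[OF assms], of "\<lambda>M. z ^ card M" S "{M. e \<in> M}"]
    unfolding Z_avoiding_def by simp
qed

(* Matchings using e correspond to matchings avoiding the endpoints of e, with one extra edge. *)
lemma Z_avoiding_containing:
  assumes fin: "finite F" and e: "e \<in> F" "e \<noteq> {}" "e \<inter> S = {}"
  shows "(\<Sum>M \<in> {M \<in> matchings_avoiding F S. e \<in> M}. z ^ card M) = z * Z_avoiding z F (S \<union> e)"
proof -
  have e_notin: "e \<notin> M" if "M \<in> matchings_avoiding F (S \<union> e)" for M
    using that e(2) unfolding matchings_avoiding_def by auto
  have "bij_betw (insert e) (matchings_avoiding F (S \<union> e)) {M \<in> matchings_avoiding F S. e \<in> M}"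
  proof (rule bij_betw_byWitness[where f' = "\<lambda>M. M - {e}"])
    show "\<forall>M\<in>matchings_avoiding F (S \<union> e). insert e M - {e} = M" using e_notin by auto
    show "\<forall>M\<in>{M \<in> matchings_avoiding F S. e \<in> M}. insert e (M - {e}) = M" by auto
    show "insert e ` matchings_avoiding F (S \<union> e) \<subseteq> {M \<in> matchings_avoiding F S. e \<in> M}"
    proof (intro subsetI, elim imageE)
      fix M' M assume M: "M \<in> matchings_avoiding F (S \<union> e)" and M': "M' = insert e M"
      have "\<forall>e'\<in>M. e' \<inter> e = {} \<and> e \<inter> e' = {} \<and> e' \<inter> S = {}"
        using M unfolding matchings_avoiding_def by auto
      thus "M' \<in> {M \<in> matchings_avoiding F S. e \<in> M}"
        using M e unfolding M' matchings_avoiding_def by auto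
    qed
    show "(\<lambda>M. M - {e}) ` {M \<in> matchings_avoiding F S. e \<in> M} \<subseteq> matchings_avoiding F (S \<union> e)"
    proof (intro subsetI, elim imageE)
      fix M' M assume M: "M \<in> {M \<in> matchings_avoiding F S. e \<in> M}" and M': "M' = M - {e}"
      have "\<forall>e'\<in>M - {e}. e' \<inter> e = {}" using M unfolding matchings_avoiding_def by auto
      thus "M' \<in> matchings_avoiding F (S \<union> e)" using M unfolding M' matchings_avoiding_def by auto
    qed
  qed
  hence "(\<Sum>M \<in> {M \<in> matchings_avoiding F S. e \<in> M}. z ^ card M)
           = (\<Sum>M \<in> matchings_avoiding F (S \<union> e). z ^ card (insert e M))"
    by (rule sum.reindex_bij_betw[symmetric])
  also have "\<dots> = (\<Sum>M \<in> matchings_avoiding F (S \<union> e). z * z ^ card M)"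
    using e_notin finite_subset[OF _ fin] by (intro sum.cong) (auto simp: matchings_avoiding_def)
  finally show ?thesis by (simp add: Z_avoiding_def sum_distrib_left)
qed

(* Expansion at a vertex u: either u is unmatched, or exactly one edge at u is used. *)
lemma Z_avoiding_vertex:
  assumes fin: "finite F"
  shows "Z_avoiding z F {} = Z_avoiding z F {u} + (\<Sum>e \<in> {e \<in> F. u \<in> e}. z * Z_avoiding z F e)"
proof -
  let ?E = "{e \<in> F. u \<in> e}" and ?P = "\<lambda>e. {M \<in> matchings_avoiding F {}. e \<in> M}"
  have decomp: "matchings_avoiding F {} = matchings_avoiding F {u} \<union> (\<Union>e\<in>?E. ?P e)"
    unfolding matchings_avoiding_def by auto
  have disj: "matchings_avoiding F {u} \<inter> (\<Union>e\<in>?E. ?P e) = {}"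
    unfolding matchings_avoiding_def by auto
  have disj_P: "\<forall>e\<in>?E. \<forall>e'\<in>?E. e \<noteq> e' \<longrightarrow> ?P e \<inter> ?P e' = {}"
  proof (intro ballI impI equals0I)
    fix e e' M assume e: "e \<in> ?E" "e' \<in> ?E" "e \<noteq> e'" and M: "M \<in> ?P e \<inter> ?P e'"
    hence "e \<in> M" "e' \<in> M" and pairwise: "\<forall>e1\<in>M. \<forall>e2\<in>M. e1 \<noteq> e2 \<longrightarrow> e1 \<inter> e2 = {}"
      by (simp_all add: matchings_avoiding_def)
    hence "e \<inter> e' = {}" using e(3) by blast
    thus False using e(1,2) by auto
  qed
  have fin_P: "\<forall>e\<in>?E. finite (?P e)" using finite_matchings_avoiding[OF fin] by simp
  have "Z_avoiding z F {} = (\<Sum>M\<in>matchings_avoiding F {u} \<union> (\<Union>e\<in>?E. ?P e). z ^ card M)"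
    unfolding Z_avoiding_def by (simp only: decomp[symmetric])
  also have "\<dots> = Z_avoiding z F {u} + (\<Sum>M\<in>(\<Union>e\<in>?E. ?P e). z ^ card M)"
    unfolding Z_avoiding_def by (rule sum.union_disjoint[OF finite_matchings_avoiding[OF fin] _ disj]) (use fin fin_P in simp)
  also have "(\<Sum>M\<in>(\<Union>e\<in>?E. ?P e). z ^ card M) = (\<Sum>e\<in>?E. \<Sum>M\<in>?P e. z ^ card M)"
    by (rule sum.UNION_disjoint[OF _ fin_P disj_P]) (use fin in simp)
  also have "(\<Sum>e\<in>?E. \<Sum>M\<in>?P e. z ^ card M) = (\<Sum>e\<in>?E. z * Z_avoiding z F e)"
    using Z_avoiding_containing[OF fin, of _ "{}" z] by (intro sum.cong) auto
  finally show ?thesis .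
qed

lemma union_matchings_avoiding:
  assumes "M1 \<in> matchings_avoiding F1 S" and "M2 \<in> matchings_avoiding F2 S"
    and apart: "\<And>e1 e2. e1 \<in> F1 \<Longrightarrow> e2 \<in> F2 \<Longrightarrow> e1 \<inter> e2 = {}"
  shows "M1 \<union> M2 \<in> matchings_avoiding (F1 \<union> F2) S"
proof -
  have M1: "M1 \<subseteq> F1" "\<forall>e1\<in>M1. \<forall>e2\<in>M1. e1 \<noteq> e2 \<longrightarrow> e1 \<inter> e2 = {}" "\<forall>e\<in>M1. e \<inter> S = {}"
    and M2: "M2 \<subseteq> F2" "\<forall>e1\<in>M2. \<forall>e2\<in>M2. e1 \<noteq> e2 \<longrightarrow> e1 \<inter> e2 = {}" "\<forall>e\<in>M2. e \<inter> S = {}"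
    using assms(1,2) unfolding matchings_avoiding_def by simp_all
  have cross: "e1 \<inter> e2 = {} \<and> e2 \<inter> e1 = {}" if "e1 \<in> M1" "e2 \<in> M2" for e1 e2
    using apart[of e1 e2] M1(1) M2(1) that by (auto simp: Int_commute)
  have "\<forall>e1\<in>M1 \<union> M2. \<forall>e2\<in>M1 \<union> M2. e1 \<noteq> e2 \<longrightarrow> e1 \<inter> e2 = {}"
    using M1(2) M2(2) cross by (metis UnE)
  thus ?thesis using M1 M2 unfolding matchings_avoiding_def by auto
qed

lemma Z_avoiding_union:
  assumes fin: "finite F1" "finite F2" and disj: "F1 \<inter> F2 = {}"
    and apart: "\<And>e1 e2. e1 \<in> F1 \<Longrightarrow> e2 \<in> F2 \<Longrightarrow> e1 \<inter> e2 = {}"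
  shows "Z_avoiding z (F1 \<union> F2) S = Z_avoiding z F1 S * Z_avoiding z F2 S"
proof -
  let ?M1 = "matchings_avoiding F1 S" and ?M2 = "matchings_avoiding F2 S"
  have bij: "bij_betw (\<lambda>(M1, M2). M1 \<union> M2) (?M1 \<times> ?M2) (matchings_avoiding (F1 \<union> F2) S)"
  proof (rule bij_betw_byWitness[where f' = "\<lambda>M. (M \<inter> F1, M \<inter> F2)"])
    show "\<forall>p\<in>?M1 \<times> ?M2. ((case p of (M1, M2) \<Rightarrow> M1 \<union> M2) \<inter> F1,
                             (case p of (M1, M2) \<Rightarrow> M1 \<union> M2) \<inter> F2) = p"
      using disj unfolding matchings_avoiding_def by auto
    show "\<forall>M\<in>matchings_avoiding (F1 \<union> F2) S. (case (M \<inter> F1, M \<inter> F2) of (M1, M2) \<Rightarrow> M1 \<union> M2) = M"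
      unfolding matchings_avoiding_def by auto
    show "(\<lambda>(M1, M2). M1 \<union> M2) ` (?M1 \<times> ?M2) \<subseteq> matchings_avoiding (F1 \<union> F2) S"
      using union_matchings_avoiding[OF _ _ apart] by auto
    show "(\<lambda>M. (M \<inter> F1, M \<inter> F2)) ` matchings_avoiding (F1 \<union> F2) S \<subseteq> ?M1 \<times> ?M2"
      unfolding matchings_avoiding_def by auto
  qed
  have card_union: "card (M1 \<union> M2) = card M1 + card M2" if "(M1, M2) \<in> ?M1 \<times> ?M2" for M1 M2
    using that disj fin by (intro card_Un_disjoint) (auto simp: matchings_avoiding_def intro: finite_subset)
  have "Z_avoiding z F1 S * Z_avoiding z F2 S = (\<Sum>(M1, M2)\<in>?M1 \<times> ?M2. z ^ card M1 * z ^ card M2)"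
    unfolding Z_avoiding_def by (simp add: sum_product sum.cartesian_product)
  also have "\<dots> = (\<Sum>(M1, M2)\<in>?M1 \<times> ?M2. z ^ card (M1 \<union> M2))"
    using card_union by (intro sum.cong) (auto simp: power_add)
  also have "\<dots> = Z_avoiding z (F1 \<union> F2) S"
    unfolding Z_avoiding_def using sum.reindex_bij_betw[OF bij, of "\<lambda>M. z ^ card M"]
    by (simp add: case_prod_unfold)
  finally show ?thesis by simp
qed

lemma card_le_one_iff_pairwise_disjoint:
  assumes "finite M"
  shows "(\<forall>v. card {e \<in> M. v \<in> e} \<le> 1) \<longleftrightarrow> (\<forall>e1\<in>M. \<forall>e2\<in>M. e1 \<noteq> e2 \<longrightarrow> e1 \<inter> e2 = {})"
proof -
  have "card {e \<in> M. v \<in> e} \<le> 1 \<longleftrightarrow> (\<forall>e1\<in>M. \<forall>e2\<in>M. v \<in> e1 \<longrightarrow> v \<in> e2 \<longrightarrow> e1 = e2)" for v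
    using card_le_Suc0_iff_eq[of "{e \<in> M. v \<in> e}"] assms by auto
  thus ?thesis by (auto simp: disjoint_iff)
qed

lemma uedges_image: "uedges D = (\<lambda>(u, v). {u, v}) ` D"
  unfolding uedges_def by auto

lemma matchings_eq_avoiding:
  assumes "finite D"
  shows "matchings D = matchings_avoiding (uedges D) {}"
proof -
  have "finite (uedges D)" using assms by (simp add: uedges_image)
  hence "(\<forall>v. card {e \<in> M. v \<in> e} \<le> 1) \<longleftrightarrow> (\<forall>e1\<in>M. \<forall>e2\<in>M. e1 \<noteq> e2 \<longrightarrow> e1 \<inter> e2 = {})"
    if "M \<subseteq> uedges D" for M
    using card_le_one_iff_pairwise_disjoint finite_subset[OF that] by blast
  thus ?thesis unfolding matchings_def matchings_avoiding_def by (simp cong: conj_cong)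
qed

lemma partition_fn_eq_avoiding: "finite D \<Longrightarrow> partition_fn D z = Z_avoiding z (uedges D) {}"
  unfolding partition_fn_def Z_avoiding_def by (simp add: matchings_eq_avoiding)

lemma finite_graph_finite: "finite_graph V D \<Longrightarrow> finite D"
  unfolding finite_graph_def by (auto intro: finite_subset)

lemma finite_uedges: "finite_graph V D \<Longrightarrow> finite (uedges D)"
  using finite_graph_finite[of V D] by (simp add: uedges_image)

(* In a graph without cycles, removing the edge uv disconnects u from v: otherwise a shortest
   path from u to v avoiding uv closes a cycle with uv. *)
lemma acyclic_edge_separates:
  assumes fg: "finite_graph V D" and acyclic: "\<nexists>cs. is_cycle D cs" and uv: "(u, v) \<in> D"
  shows "(u, v) \<notin> (D - {(u, v), (v, u)})\<^sup>*"
proof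
  let ?D' = "D - {(u, v), (v, u)}"
  let ?r = "\<lambda>a b. (a, b) \<in> ?D'"
  assume "(u, v) \<in> ?D'\<^sup>*"
  moreover have "{(a, b). ?r a b} = ?D'" by auto
  ultimately have "?r\<^sup>*\<^sup>* u v" by (metis rtranclp_rtrancl_eq)
  then obtain xs where "rtrancl_path ?r u xs v" using rtranclp_eq_rtrancl_path by metis
  then obtain xs where path: "rtrancl_path ?r u xs v" and dist: "distinct (u # xs)"
    using rtrancl_path_distinct by metis
  have "u \<noteq> v" using fg uv unfolding finite_graph_def by auto
  hence nonempty: "xs \<noteq> []" using path by (auto elim: rtrancl_path.cases)
  have last: "last xs = v" by (rule rtrancl_path_last[OF path nonempty])
  have steps: "?r ((u # xs) ! i) (xs ! i)" if "i < length xs" for i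
    using rtrancl_path_nth[OF path that] .
  have "xs \<noteq> [v]" using steps[of 0] by auto
  hence long: "length xs \<ge> 2" using nonempty last by (cases xs rule: rev_cases) (auto simp: Suc_le_eq)
  have "is_cycle D (u # xs)"
    unfolding is_cycle_def
  proof (intro conjI allI impI)
    show "3 \<le> length (u # xs)" using long by simp
    show "distinct (u # xs)" by (rule dist)
    show "((u # xs) ! i, (u # xs) ! Suc i) \<in> D" if "i < length (u # xs) - 1" for i
      using steps[of i] that by simp
    show "(last (u # xs), hd (u # xs)) \<in> D"
      using last nonempty uv fg unfolding finite_graph_def by (auto dest: symD)
  qed
  with acyclic show False by blast
qed

lemma acyclic_edge_split:
  assumes fg: "finite_graph V D" and acyclic: "\<nexists>cs. is_cycle D cs" and uv: "(u, v) \<in> D"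
  obtains F1 F2 where "uedges D - {{u, v}} = F1 \<union> F2" and "F1 \<inter> F2 = {}"
    and "finite F1" and "finite F2"
    and "\<And>e1 e2. e1 \<in> F1 \<Longrightarrow> e2 \<in> F2 \<Longrightarrow> e1 \<inter> e2 = {}"
    and "\<And>e. e \<in> F1 \<Longrightarrow> v \<notin> e" and "\<And>e. e \<in> F2 \<Longrightarrow> u \<notin> e"
proof -
  let ?D' = "D - {(u, v), (v, u)}"
  define F where "F = uedges D - {{u, v}}"
  define C where "C = {x. (u, x) \<in> ?D'\<^sup>*}"
  have sym: "sym D" using fg unfolding finite_graph_def by auto
  have "u \<in> C" and "v \<notin> C" unfolding C_def using acyclic_edge_separates[OF fg acyclic uv] by simp_all
  have closed: "a \<in> C \<longleftrightarrow> b \<in> C" if "(a, b) \<in> ?D'" for a b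
  proof -
    have "(b, a) \<in> ?D'" using that sym by (auto dest: symD)
    thus ?thesis unfolding C_def using that by (auto intro: rtrancl_into_rtrancl)
  qed
  have inside_or_outside: "e \<subseteq> C \<or> e \<inter> C = {}" and nonempty: "e \<noteq> {}" if eF: "e \<in> F" for e
  proof -
    obtain a b where e: "e = {a, b}" "(a, b) \<in> D" using eF unfolding F_def uedges_def by auto
    hence "(a, b) \<in> ?D'" using eF unfolding F_def by auto
    thus "e \<subseteq> C \<or> e \<inter> C = {}" using closed e by auto
    show "e \<noteq> {}" using e by simp
  qed
  show thesis
  proof (rule that[of "{e \<in> F. e \<subseteq> C}" "{e \<in> F. e \<inter> C = {}}"])
    show "uedges D - {{u, v}} = {e \<in> F. e \<subseteq> C} \<union> {e \<in> F. e \<inter> C = {}}"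
      using inside_or_outside unfolding F_def by auto
    show "{e \<in> F. e \<subseteq> C} \<inter> {e \<in> F. e \<inter> C = {}} = {}" using nonempty by auto
    show "finite {e \<in> F. e \<subseteq> C}" "finite {e \<in> F. e \<inter> C = {}}"
      unfolding F_def using finite_uedges[OF fg] by simp_all
  qed (use \<open>u \<in> C\<close> \<open>v \<notin> C\<close> in auto)
qed

(* The key identity Z(G,{u}) Z(G,{v}) = Z(G,{u,v}) Z(G-uv,{}), by factorising both sides
   over the two parts of G - uv. *)
lemma acyclic_Z_identity:
  assumes fg: "finite_graph V D" and acyclic: "\<nexists>cs. is_cycle D cs" and uv: "(u, v) \<in> D"
  shows "Z_avoiding z (uedges D) {u} * Z_avoiding z (uedges D) {v}
           = Z_avoiding z (uedges D) {u, v} * Z_avoiding z (uedges D - {{u, v}}) {}"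
proof -
  obtain F1 F2 where split: "uedges D - {{u, v}} = F1 \<union> F2" and disj: "F1 \<inter> F2 = {}"
    and fin: "finite F1" "finite F2" and apart: "\<And>e1 e2. e1 \<in> F1 \<Longrightarrow> e2 \<in> F2 \<Longrightarrow> e1 \<inter> e2 = {}"
    and F1_v: "\<And>e. e \<in> F1 \<Longrightarrow> v \<notin> e" and F2_u: "\<And>e. e \<in> F2 \<Longrightarrow> u \<notin> e"
    using acyclic_edge_split[OF fg acyclic uv] by blast
  let ?Z = "Z_avoiding z"
  have remove: "?Z (uedges D) S = ?Z F1 S * ?Z F2 S" if "{u, v} \<inter> S \<noteq> {}" for S
    using Z_avoiding_remove_edge[OF that] Z_avoiding_union[OF fin disj apart] split by metis
  have F1_uv: "?Z F1 {u, v} = ?Z F1 {u}" and F1_v: "?Z F1 {v} = ?Z F1 {}"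
    and F2_uv: "?Z F2 {u, v} = ?Z F2 {v}" and F2_u: "?Z F2 {u} = ?Z F2 {}"
    using F1_v F2_u by (auto intro!: Z_avoiding_cong)
  have "?Z (uedges D) {u} * ?Z (uedges D) {v} = (?Z F1 {u} * ?Z F2 {}) * (?Z F1 {} * ?Z F2 {v})"
    using remove[of "{u}"] remove[of "{v}"] F1_v F2_u by simp
  also have "\<dots> = (?Z F1 {u, v} * ?Z F2 {u, v}) * (?Z F1 {} * ?Z F2 {})"
    using F1_uv F2_uv by simp
  also have "\<dots> = ?Z (uedges D) {u, v} * ?Z (uedges D - {{u, v}}) {}"
    using remove[of "{u, v}"] Z_avoiding_union[OF fin disj apart] split by simp
  finally show ?thesis .
qed

definition tree_cavity :: "real \<Rightarrow> ('a \<times> 'a) set \<Rightarrow> 'a \<times> 'a \<Rightarrow> real" where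
  "tree_cavity z D e =
     z * Z_avoiding z (uedges D) {fst e} / Z_avoiding z (uedges D - {{fst e, snd e}}) {}"

lemma tree_cavity_pos:
  assumes "finite D" and "z > 0"
  shows "tree_cavity z D e > 0"
  using assms Z_avoiding_pos[of "uedges D" z] Z_avoiding_pos[of "uedges D - _" z]
  unfolding tree_cavity_def by (simp add: uedges_image)

(* By the key identity, Y(w->u) = z Z(G,{w,u}) / Z(G,{u}). *)
lemma tree_cavity_alt:
  assumes fg: "finite_graph V D" and acyclic: "\<nexists>cs. is_cycle D cs" and wu: "(w, u) \<in> D" and z: "z > 0"
  shows "tree_cavity z D (w, u) = z * Z_avoiding z (uedges D) {w, u} / Z_avoiding z (uedges D) {u}"
proof -
  note fin = finite_uedges[OF fg]
  have "Z_avoiding z (uedges D) {u} > 0" "Z_avoiding z (uedges D - {{w, u}}) {} > 0"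
    using Z_avoiding_pos[OF fin z] Z_avoiding_pos[of "uedges D - {{w, u}}" z] fin z by auto
  thus ?thesis using acyclic_Z_identity[OF fg acyclic wu, of z]
    unfolding tree_cavity_def by (simp add: divide_simps)
qed

lemma edges_at_vertex:
  assumes fg: "finite_graph V D" and uv: "(u, v) \<in> D"
  shows "{e \<in> uedges D - {{u, v}}. u \<in> e} = (\<lambda>w. {w, u}) ` (nbrs D u - {v})"
    and "inj_on (\<lambda>w. {w, u}) (nbrs D u - {v})"
proof -
  have sym: "sym D" and irrefl: "\<And>x. (x, x) \<notin> D" using fg unfolding finite_graph_def by auto
  show "{e \<in> uedges D - {{u, v}}. u \<in> e} = (\<lambda>w. {w, u}) ` (nbrs D u - {v})"
    using irrefl by (auto simp: uedges_def nbrs_def doubleton_eq_iff insert_commute dest: symD[OF sym])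
  show "inj_on (\<lambda>w. {w, u}) (nbrs D u - {v})"
    using irrefl by (auto intro!: inj_onI simp: nbrs_def doubleton_eq_iff)
qed

lemma Z_avoiding_star:
  assumes fg: "finite_graph V D" and uv: "(u, v) \<in> D"
  shows "Z_avoiding z (uedges D - {{u, v}}) {}
           = Z_avoiding z (uedges D) {u} + (\<Sum>w \<in> nbrs D u - {v}. z * Z_avoiding z (uedges D) {w, u})"
proof -
  let ?U = "uedges D" and ?N = "nbrs D u - {v}"
  have fin: "finite (?U - {{u, v}})" using finite_uedges[OF fg] by simp
  have "Z_avoiding z (?U - {{u, v}}) {}
          = Z_avoiding z (?U - {{u, v}}) {u} + (\<Sum>w\<in>?N. z * Z_avoiding z (?U - {{u, v}}) {w, u})"
    using Z_avoiding_vertex[OF fin, of z u] sum.reindex[OF edges_at_vertex(2)[OF fg uv]]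
    unfolding edges_at_vertex(1)[OF fg uv] by (simp add: comp_def)
  also have "\<dots> = Z_avoiding z ?U {u} + (\<Sum>w\<in>?N. z * Z_avoiding z ?U {w, u})"
    by (simp add: Z_avoiding_remove_edge)
  finally show ?thesis .
qed

lemma tree_cavity_fixed_point:
  assumes fg: "finite_graph V D" and acyclic: "\<nexists>cs. is_cycle D cs" and uv: "(u, v) \<in> D" and z: "z > 0"
  shows "tree_cavity z D (u, v) = z * RG D (tree_cavity z D) (u, v)"
proof -
  let ?U = "uedges D" and ?N = "nbrs D u - {v}"
  define A where "A = Z_avoiding z ?U {u}"
  define T where "T = (\<Sum>w\<in>?N. z * Z_avoiding z ?U {w, u})"
  have star: "Z_avoiding z (?U - {{u, v}}) {} = A + T"
    unfolding A_def T_def by (rule Z_avoiding_star[OF fg uv])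
  have A_pos: "A > 0" unfolding A_def by (rule Z_avoiding_pos[OF finite_uedges[OF fg] z])
  have AT_pos: "A + T > 0"
    unfolding star[symmetric] using finite_uedges[OF fg] z by (simp add: Z_avoiding_pos)
  have "(\<Sum>w\<in>?N. tree_cavity z D (w, u)) = T / A"
    using tree_cavity_alt[OF fg acyclic _ z]
    unfolding A_def T_def by (simp add: nbrs_def sum_divide_distrib)
  hence "RG D (tree_cavity z D) (u, v) = 1 / (1 + T / A)" by (simp add: RG_def)
  also have "\<dots> = A / (A + T)" using A_pos AT_pos by (simp add: field_simps)
  finally have "RG D (tree_cavity z D) (u, v) = A / (A + T)" .
  moreover have "tree_cavity z D (u, v) = z * (A / (A + T))"
    unfolding tree_cavity_def by (simp add: star A_def)
  ultimately show ?thesis by simp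
qed

(* The Gibbs probability of an edge in terms of the explicit solution: with
   x = Y(u->v) Y(v->u)/z = z Z(G,{u,v}) / Z(G-uv,{}), the probability is x/(1+x). *)
lemma gibbs_edge_prob_tree_cavity:
  assumes fg: "finite_graph V D" and acyclic: "\<nexists>cs. is_cycle D cs" and uv: "(u, v) \<in> D" and z: "z > 0"
  defines "x \<equiv> tree_cavity z D (u, v) * (tree_cavity z D (v, u) / z)"
  shows "gibbs_edge_prob D z {u, v} = x / (1 + x)"
proof -
  let ?U = "uedges D" and ?Z = "Z_avoiding z"
  note fin = finite_uedges[OF fg]
  have e: "{u, v} \<in> ?U" "{u, v} \<noteq> {}" "{u, v} \<inter> {} = {}" using uv unfolding uedges_def by auto
  have pos: "?Z ?U {u, v} > 0" "?Z (?U - {{u, v}}) {} > 0"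
    using Z_avoiding_pos[OF fin z] Z_avoiding_pos[OF finite_Diff[OF fin] z] by auto
  have matched: "(\<Sum>M \<in> {M \<in> matchings D. {u, v} \<in> M}. z ^ card M) = z * ?Z ?U {u, v}"
    using Z_avoiding_containing[OF fin e, of z]
    by (simp add: matchings_eq_avoiding[OF finite_graph_finite[OF fg]])
  have total: "partition_fn D z = ?Z (?U - {{u, v}}) {} + z * ?Z ?U {u, v}"
    using Z_avoiding_split_edge[OF fin, of z "{}" "{u, v}"] Z_avoiding_containing[OF fin e, of z]
    by (simp add: partition_fn_eq_avoiding[OF finite_graph_finite[OF fg]])
  have "x = z * (?Z ?U {u} * ?Z ?U {v}) / (?Z (?U - {{u, v}}) {})\<^sup>2"
    unfolding x_def tree_cavity_def using z by (simp add: insert_commute power2_eq_square)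
  also have "\<dots> = z * ?Z ?U {u, v} / ?Z (?U - {{u, v}}) {}"
    unfolding acyclic_Z_identity[OF fg acyclic uv] using pos by (simp add: power2_eq_square)
  finally have x: "x = z * ?Z ?U {u, v} / ?Z (?U - {{u, v}}) {}" .
  show ?thesis unfolding gibbs_edge_prob_def matched total x using pos z by (simp add: divide_simps)
qed


(* Part (iii): on a tree the explicit solution is RG_limit, and R_G(Y)(v->u) = Y(v->u)/z. *)
lemma tree_gibbs_edge_prob:
  assumes fg: "finite_graph V D" and tree: "is_tree V D" and z: "z > 0" and uv: "(u, v) \<in> D"
  shows "gibbs_edge_prob D z {u, v} =
           RG_limit D z (u, v) * RG D (RG_limit D z) (v, u)
             / (1 + RG_limit D z (u, v) * RG D (RG_limit D z) (v, u))"
proof -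
  have acyclic: "\<nexists>cs. is_cycle D cs" using tree unfolding is_tree_def by blast
  note fin = finite_graph_finite[OF fg]
  have cavity_is_limit: "tree_cavity z D e = RG_limit D z e" if "e \<in> D" for e
    using RG_limit_unique[OF fin z that] tree_cavity_pos[OF fin z] tree_cavity_fixed_point[OF fg acyclic _ z]
    by (metis less_imp_le prod.collapse)
  have vu: "(v, u) \<in> D" using uv fg unfolding finite_graph_def by (auto dest: symD)
  have "RG D (RG_limit D z) (v, u) = tree_cavity z D (v, u) / z"
    using RG_limit_fixed_point[OF fin z vu] cavity_is_limit[OF vu] z by simp
  thus ?thesis using gibbs_edge_prob_tree_cavity[OF fg acyclic uv z] cavity_is_limit[OF uv] by simp
qed

theorem proposition6:
  fixes V :: "'a set" and D :: "('a \<times> 'a) set"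
  assumes "finite_graph V D"
  shows "\<exists>Y :: real \<Rightarrow> 'a \<times> 'a \<Rightarrow> real.
    (\<forall>z > 0.
        (\<forall>e \<in> D. Y z e > 0)
      \<and> (\<forall>e \<in> D. Y z e = z * RG D (Y z) e)
      \<and> (\<forall>X. (\<forall>e \<in> D. X e \<ge> 0) \<and> (\<forall>e \<in> D. X e = z * RG D X e)
              \<longrightarrow> (\<forall>e \<in> D. X e = Y z e))
      \<and> (\<forall>e \<in> D. (\<lambda>t. RG_iter D z t e) \<longlonglongrightarrow> Y z e))
  \<and> (\<forall>z1 z2. 0 < z1 \<and> z1 \<le> z2 \<longrightarrow>
        (\<forall>e \<in> D. Y z1 e \<le> Y z2 e \<and> Y z2 e / z2 \<le> Y z1 e / z1))
  \<and> (is_tree V D \<longrightarrow>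
        (\<forall>z > 0. \<forall>u v. (u, v) \<in> D \<longrightarrow>
           gibbs_edge_prob D z {u, v} =
             Y z (u, v) * RG D (Y z) (v, u) / (1 + Y z (u, v) * RG D (Y z) (v, u))))"
proof -
  note fin = finite_graph_finite[OF assms]
  show ?thesis
  proof (intro exI[of _ "RG_limit D"] conjI allI impI ballI)
    fix z :: real and e assume z: "0 < z" and e: "e \<in> D"
    show "0 < RG_limit D z e" by (rule RG_limit_pos[OF fin z e])
    show "RG_limit D z e = z * RG D (RG_limit D z) e" by (rule RG_limit_fixed_point[OF fin z e])
    show "(\<lambda>t. RG_iter D z t e) \<longlonglongrightarrow> RG_limit D z e" by (rule RG_iter_tendsto[OF fin z e])
  next
    fix z :: real and X e
    assume z: "0 < z" and X: "(\<forall>e\<in>D. 0 \<le> X e) \<and> (\<forall>e\<in>D. X e = z * RG D X e)" and e: "e \<in> D"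
    show "X e = RG_limit D z e" using X by (intro RG_limit_unique[OF fin z e]) blast+
  next
    fix z1 z2 :: real and e assume "0 < z1 \<and> z1 \<le> z2" and e: "e \<in> D"
    thus "RG_limit D z1 e \<le> RG_limit D z2 e" and "RG_limit D z2 e / z2 \<le> RG_limit D z1 e / z1"
      using RG_limit_mono[OF fin] by blast+
  next
    fix z :: real and u v assume "is_tree V D" and "0 < z" and "(u, v) \<in> D"
    thus "gibbs_edge_prob D z {u, v} =
            RG_limit D z (u, v) * RG D (RG_limit D z) (v, u)
              / (1 + RG_limit D z (u, v) * RG D (RG_limit D z) (v, u))"
      by (rule tree_gibbs_edge_prob[OF assms])
  qed
qed

end
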